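(* Let $G$ be a profinite group, and let $G=G_0\ge\cdots\ge G_\alpha\ge\cdots\ge G_\mu=\{e\}$ and $G=H_0\ge\cdots\ge H_\lambda\ge\cdots\ge H_\Delta=\{e\}$ be two composition series for $G$ (over ordinals $\mu$ and $\Delta$). Let $S$ be a finite simple group, and put $\mathcal S_1=\{\alpha<\mu : G_\alpha/G_{\alpha+1}\cong S\}$ and $\mathcal S_2=\{\lambda<\Delta : H_\lambda/H_{\lambda+1}\cong S\}$. Then $|\mathcal S_1|=|\mathcal S_2|$ (equality of cardinals).
   Context: All subgroups of profinite groups are closed and all quotients are topological quotients. An accessible series from $G$ to $\{e\}$ over an ordinal $\mu$ is a family of closed subgroups $G=G_0\ge\cdots\ge G_\lambda\ge\cdots\ge G_\mu=\{e\}$ with $G_{\alpha+1}\trianglelefteq G_\alpha$ for all $\alpha<\mu$ and $G_\alpha=\bigcap_{\beta<\alpha}G_\beta$ for all limit $\alpha\le\mu$. A composition series for $G$ is such a series with $G_\lambda/G_{\lambda+1}$ finite simple nontrivial for all $\lambda<\mu$. *)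

theory Defs
  imports "HOL-Analysis.Analysis" "HOL-Algebra.Algebra" "HOL-Library.Equipollence"
begin

definition profinite_group :: "('a, 'b) monoid_scheme \<Rightarrow> 'a topology \<Rightarrow> bool" where
  "profinite_group G T \<longleftrightarrow>
     group G \<and> topspace T = carrier G \<and>
     continuous_map (prod_topology T T) T (\<lambda>(x, y). x \<otimes>\<^bsub>G\<^esub> y) \<and>
     continuous_map T T (\<lambda>x. inv\<^bsub>G\<^esub> x) \<and>
     compact_space T \<and> Hausdorff_space T \<and>
     (\<forall>x y. connected_component_of T x y \<longrightarrow> x = y)"

text \<open>Ordinals are modelled as elements of a well-ordered type; the series is indexed
  by the initial segment {..mu}. The successor of an index is the least strictly larger one.\<close>
definition ord_succ :: "'i::wellorder \<Rightarrow> 'i" where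
  "ord_succ a = (LEAST b. a < b)"

definition is_limit :: "'i::wellorder \<Rightarrow> bool" where
  "is_limit a \<longleftrightarrow> (\<exists>b. b < a) \<and> (\<forall>b. b < a \<longrightarrow> (\<exists>c. b < c \<and> c < a))"

definition composition_series ::
  "('a, 'b) monoid_scheme \<Rightarrow> 'a topology \<Rightarrow> 'i::wellorder \<Rightarrow> ('i \<Rightarrow> 'a set) \<Rightarrow> bool" where
  "composition_series G T mu Gs \<longleftrightarrow>
     Gs (LEAST a. True) = carrier G \<and> Gs mu = {\<one>\<^bsub>G\<^esub>} \<and>
     (\<forall>a\<le>mu. subgroup (Gs a) G \<and> closedin T (Gs a)) \<and>
     (\<forall>a b. a \<le> b \<and> b \<le> mu \<longrightarrow> Gs b \<subseteq> Gs a) \<and>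
     (\<forall>a<mu. Gs (ord_succ a) \<lhd> (G\<lparr>carrier := Gs a\<rparr>)) \<and>
     (\<forall>a\<le>mu. is_limit a \<longrightarrow> Gs a = (\<Inter>b\<in>{b. b < a}. Gs b)) \<and>
     (\<forall>a<mu. finite (carrier ((G\<lparr>carrier := Gs a\<rparr>) Mod Gs (ord_succ a))) \<and>
             simple_group ((G\<lparr>carrier := Gs a\<rparr>) Mod Gs (ord_succ a)))"

end

theory Submission
  imports Defs
begin

text \<open>Refine the series (G_a) by (H_b) as in Schreier's theorem: between G_a and G_(a+1) insert
  the descending chain G_(a+1) (G_a \<inter> H_b), b \<le> \<Delta>. As G_a/G_(a+1) is simple, this chain equals
  G_a up to some b and drops to G_(a+1) in the single successor step from b = \<phi>(a) to b + 1:
  the drop cannot first happen at a limit, because G is compact and all the groups are closed.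
  By Zassenhaus' lemma the step at (a, b) is isomorphic to the step at (b, a) of the symmetric
  refinement of (H_b) by (G_a), so \<phi> is a bijection from \<mu> onto \<Delta> with
  G_a/G_(a+1) \<cong> H_\<phi>(a)/H_(\<phi>(a)+1); it restricts to the indices whose factor is isomorphic to S.\<close>

lemma ord_succ_greater: "(a::'i::wellorder) < c \<Longrightarrow> a < ord_succ a"
  unfolding ord_succ_def by (rule LeastI)

lemma ord_succ_le: "(a::'i::wellorder) < c \<Longrightarrow> ord_succ a \<le> c"
  unfolding ord_succ_def by (rule Least_le)

lemma Least_True_le: "(LEAST a::'i::wellorder. True) \<le> x"
  by (rule Least_le) simp

lemma not_limit_obtains_ord_succ:
  assumes "\<not> is_limit (f::'i::wellorder)" and "b < f"
  obtains p where "p < f" and "f = ord_succ p"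
proof -
  from assms obtain p where p: "p < f" and no_between: "\<forall>c. p < c \<longrightarrow> \<not> c < f"
    unfolding is_limit_def by blast
  have "\<not> ord_succ p < f"
    using no_between ord_succ_greater[OF p] by blast
  with ord_succ_le[OF p] have "f = ord_succ p" by simp
  with p show thesis by (rule that)
qed

lemma bij_betw_THE_unique:
  assumes "\<And>a. a \<in> A \<Longrightarrow> \<exists>!b. b \<in> B \<and> R a b"
    and "\<And>b. b \<in> B \<Longrightarrow> \<exists>!a. a \<in> A \<and> R a b"
  shows "bij_betw (\<lambda>a. THE b. b \<in> B \<and> R a b) A B"
proof -
  define f where "f a = (THE b. b \<in> B \<and> R a b)" for a
  have f: "f a \<in> B \<and> R a (f a)" if "a \<in> A" for a
    unfolding f_def using theI'[OF assms(1)[OF that]] .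
  have "inj_on f A"
    by (rule inj_onI) (metis f assms(2))
  moreover have "f ` A = B"
  proof
    show "f ` A \<subseteq> B" using f by blast
    show "B \<subseteq> f ` A"
    proof
      fix b assume b: "b \<in> B"
      then obtain a where a: "a \<in> A" "R a b" using assms(2) by blast
      with b have "f a = b" using f assms(1) by blast
      with a show "b \<in> f ` A" by blast
    qed
  qed
  ultimately show ?thesis unfolding f_def bij_betw_def by blast
qed

lemma eqpoll_Collect_bij_betw:
  assumes "bij_betw f A B" and "\<And>a. a \<in> A \<Longrightarrow> P a \<longleftrightarrow> Q (f a)"
  shows "{a \<in> A. P a} \<approx> {b \<in> B. Q b}"
proof -
  have "bij_betw f {a \<in> A. P a} {b \<in> B. Q b}"
    using assms unfolding bij_betw_def inj_on_def by auto
  then show ?thesis unfolding eqpoll_def by blast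
qed

lemma (in group) card_quotient_eq_1_iff:
  assumes N: "subgroup N G" and A: "subgroup A G" and "N \<subseteq> A"
  shows "card (carrier (G\<lparr>carrier := A\<rparr> Mod N)) = 1 \<longleftrightarrow> A = N"
proof -
  have carrier_eq: "carrier (G\<lparr>carrier := A\<rparr> Mod N) = (\<lambda>x. N #> x) ` A"
    unfolding FactGroup_def RCOSETS_def by auto
  have N_rcos: "N #> x = N" if "x \<in> N" for x
    using subgroup.rcos_const[OF N is_group that] .
  show ?thesis
  proof
    assume "card (carrier (G\<lparr>carrier := A\<rparr> Mod N)) = 1"
    moreover have "N \<in> carrier (G\<lparr>carrier := A\<rparr> Mod N)"
      unfolding carrier_eq using N_rcos subgroup.one_closed[OF N] \<open>N \<subseteq> A\<close> by force
    ultimately have trivial: "N #> x = N" if "x \<in> A" for x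
      using that unfolding carrier_eq by (metis card_1_singletonE image_eqI singletonD)
    have "x \<in> N" if "x \<in> A" for x
      using rcos_self[OF subgroup.mem_carrier[OF A that] N] trivial[OF that] by simp
    with \<open>N \<subseteq> A\<close> show "A = N" by blast
  next
    assume "A = N"
    then have "carrier (G\<lparr>carrier := A\<rparr> Mod N) = {N}"
      unfolding carrier_eq using N_rcos subgroup.one_closed[OF N] by force
    then show "card (carrier (G\<lparr>carrier := A\<rparr> Mod N)) = 1" by simp
  qed
qed

lemma (in group) iso_quotients_trivial_iff:
  assumes "(G\<lparr>carrier := A\<rparr> Mod N) \<cong> (G\<lparr>carrier := B\<rparr> Mod M)"
    and "subgroup N G" "subgroup A G" "N \<subseteq> A"
    and "subgroup M G" "subgroup B G" "M \<subseteq> B"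
  shows "A = N \<longleftrightarrow> B = M"
  using iso_same_card[OF assms(1)] card_quotient_eq_1_iff assms(2-7) by metis

lemma (in group) simple_quotient_normal_between:
  assumes A: "subgroup A G" and HA: "H \<lhd> G\<lparr>carrier := A\<rparr>"
    and simple: "simple_group (G\<lparr>carrier := A\<rparr> Mod H)"
    and N: "N \<lhd> G\<lparr>carrier := A\<rparr>" and "H \<subseteq> N"
  shows "N = A \<or> N = H"
proof -
  interpret A: group "G\<lparr>carrier := A\<rparr>" using subgroup_imp_group[OF A] .
  have N_sub: "subgroup N G" and "N \<subseteq> A"
    using incl_subgroup[OF A normal_imp_subgroup[OF N]] subgroup.subset[OF normal_imp_subgroup[OF N]]
    by auto
  have H_sub: "subgroup H G"
    using incl_subgroup[OF A normal_imp_subgroup[OF HA]] .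
  have "rcosets\<^bsub>G\<lparr>carrier := A, carrier := N\<rparr>\<^esub> H \<lhd> (G\<lparr>carrier := A\<rparr> Mod H)"
    using A.normality_factorization[OF HA \<open>H \<subseteq> N\<close> N] .
  then have "rcosets\<^bsub>G\<lparr>carrier := A, carrier := N\<rparr>\<^esub> H = carrier (G\<lparr>carrier := A\<rparr> Mod H)
      \<or> rcosets\<^bsub>G\<lparr>carrier := A, carrier := N\<rparr>\<^esub> H = {\<one>\<^bsub>G\<lparr>carrier := A\<rparr> Mod H\<^esub>}"
    using simple_group.no_real_normal_subgroup[OF simple] by blast
  then show ?thesis
  proof
    assume all: "rcosets\<^bsub>G\<lparr>carrier := A, carrier := N\<rparr>\<^esub> H = carrier (G\<lparr>carrier := A\<rparr> Mod H)"
    have "g \<in> N" if g: "g \<in> A" for g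
    proof -
      have "H #> g \<in> rcosets\<^bsub>G\<lparr>carrier := A, carrier := N\<rparr>\<^esub> H"
        unfolding all using g unfolding FactGroup_def RCOSETS_def by auto
      then obtain x where x: "x \<in> N" "H #> g = H #> x"
        unfolding RCOSETS_def by auto
      have "g \<in> H #> x"
        using x(2) rcos_self[OF subgroup.mem_carrier[OF A g] H_sub] by simp
      also have "H #> x \<subseteq> N"
        using \<open>H \<subseteq> N\<close> x(1) unfolding r_coset_def by (auto intro: subgroup.m_closed[OF N_sub])
      finally show "g \<in> N" .
    qed
    with \<open>N \<subseteq> A\<close> show ?thesis by blast
  next
    assume "rcosets\<^bsub>G\<lparr>carrier := A, carrier := N\<rparr>\<^esub> H = {\<one>\<^bsub>G\<lparr>carrier := A\<rparr> Mod H\<^esub>}"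
    then have "card (carrier (G\<lparr>carrier := N\<rparr> Mod H)) = 1"
      by (simp add: FactGroup_def)
    then show ?thesis using card_quotient_eq_1_iff[OF H_sub N_sub \<open>H \<subseteq> N\<close>] by blast
  qed
qed

lemma (in group) normal_set_mult_Int_subgroup:
  assumes A: "subgroup A G" and N: "N \<lhd> G\<lparr>carrier := A\<rparr>" and B: "subgroup B G"
  shows "subgroup (N <#> (A \<inter> B)) G"
proof -
  have "subgroup (A \<inter> B) (G\<lparr>carrier := A\<rparr>)"
    using subgroup_incl[OF subgroups_Inter_pair[OF A B] A] by blast
  then have "subgroup (N <#> (A \<inter> B)) (G\<lparr>carrier := A\<rparr>)"
    using mult_norm_sub_in_sub[OF N _ A] by blast
  then show ?thesis using incl_subgroup[OF A] by blast
qed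

lemma (in group) set_mult_Inter_chain_compact:
  fixes K :: "'j::linorder \<Rightarrow> 'a set"
  assumes top: "topspace T = carrier G" and compact: "compact_space T"
    and mult_cont: "continuous_map (prod_topology T T) T (\<lambda>(x, y). x \<otimes> y)"
    and inv_cont: "continuous_map T T (\<lambda>x. inv x)"
    and H: "closedin T H"
    and K_closed: "\<And>i. i \<in> I \<Longrightarrow> closedin T (K i)"
    and K_antimono: "\<And>i j. i \<in> I \<Longrightarrow> j \<in> I \<Longrightarrow> i \<le> j \<Longrightarrow> K j \<subseteq> K i"
    and "I \<noteq> {}"
    and x: "\<And>i. i \<in> I \<Longrightarrow> x \<in> H <#> K i"
  shows "x \<in> H <#> (\<Inter>i\<in>I. K i)"
proof -
  obtain i0 where "i0 \<in> I" using \<open>I \<noteq> {}\<close> by blast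
  have H_carrier: "H \<subseteq> carrier G" and K_carrier: "\<And>i. i \<in> I \<Longrightarrow> K i \<subseteq> carrier G"
    using closedin_subset[OF H] closedin_subset[OF K_closed] top by auto
  have x_carrier: "x \<in> carrier G"
    using x[OF \<open>i0 \<in> I\<close>] H_carrier K_carrier[OF \<open>i0 \<in> I\<close>] unfolding set_mult_def by auto
  define C where "C = {z \<in> topspace T. x \<otimes> inv z \<in> H}"
  have "continuous_map T T (\<lambda>z. x \<otimes> inv z)"
  proof -
    have "continuous_map T (prod_topology T T) (\<lambda>z. (x, inv z))"
      using inv_cont x_carrier top by (intro continuous_map_pairedI) auto
    then show ?thesis
      using continuous_map_compose[OF _ mult_cont] by (fastforce simp: o_def)
  qed
  then have "closedin T C"
    unfolding C_def using closedin_continuous_map_preimage H by blast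
  have C_meets: "C \<inter> K i \<noteq> {}" if i: "i \<in> I" for i
  proof -
    obtain h k where hk: "h \<in> H" "k \<in> K i" "x = h \<otimes> k"
      using x[OF i] unfolding set_mult_def by blast
    have "k \<in> carrier G" "h \<in> carrier G" using hk H_carrier K_carrier[OF i] by auto
    then have "x \<otimes> inv k = h" using hk(3) by (simp add: m_assoc)
    with hk \<open>k \<in> carrier G\<close> top have "k \<in> C" unfolding C_def by simp
    with hk(2) show ?thesis by blast
  qed
  have fip: "\<Inter>((\<lambda>i. C \<inter> K i) ` F) \<noteq> {}" if F: "finite F" "F \<subseteq> I" for F
  proof (cases "F = {}")
    case False
    then have "Max F \<in> I" using Max_in F by blast
    moreover have "K (Max F) \<subseteq> K i" if "i \<in> F" for i
      using K_antimono Max_ge F that \<open>Max F \<in> I\<close> by blast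
    ultimately show ?thesis using C_meets[of "Max F"] by blast
  qed simp
  moreover have "\<forall>D \<in> (\<lambda>i. C \<inter> K i) ` I. closedin T D"
    using \<open>closedin T C\<close> K_closed by blast
  ultimately have "\<Inter>((\<lambda>i. C \<inter> K i) ` I) \<noteq> {}"
    using compact unfolding compact_space_fip by (metis finite_subset_image)
  then obtain z where "z \<in> C" and z: "z \<in> (\<Inter>i\<in>I. K i)"
    using \<open>i0 \<in> I\<close> by blast
  then have "x \<otimes> inv z \<in> H" and "z \<in> carrier G" unfolding C_def using top by auto
  moreover have "x = (x \<otimes> inv z) \<otimes> z"
    using x_carrier \<open>z \<in> carrier G\<close> by (simp add: m_assoc)
  ultimately show ?thesis using z unfolding set_mult_def by blast
qed

locale comp_series = group G for G :: "('a, 'b) monoid_scheme" (structure) +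
  fixes T :: "'a topology" and m :: "'i::wellorder" and Gs :: "'i \<Rightarrow> 'a set"
  assumes series: "composition_series G T m Gs"
begin

lemma first: "Gs (LEAST a. True) = carrier G"
  using series unfolding composition_series_def by simp

lemma last: "Gs m = {\<one>}"
  using series unfolding composition_series_def by simp

lemma is_subgroup: "a \<le> m \<Longrightarrow> subgroup (Gs a) G"
  using series unfolding composition_series_def by simp

lemma closed: "a \<le> m \<Longrightarrow> closedin T (Gs a)"
  using series unfolding composition_series_def by simp

lemma antimono: "a \<le> b \<Longrightarrow> b \<le> m \<Longrightarrow> Gs b \<subseteq> Gs a"
  using series unfolding composition_series_def by simp

lemma normal_succ: "a < m \<Longrightarrow> Gs (ord_succ a) \<lhd> G\<lparr>carrier := Gs a\<rparr>"
  using series unfolding composition_series_def by simp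

lemma limit: "a \<le> m \<Longrightarrow> is_limit a \<Longrightarrow> Gs a = (\<Inter>b\<in>{b. b < a}. Gs b)"
  using series unfolding composition_series_def by simp

lemma simple_quotient: "a < m \<Longrightarrow> simple_group (G\<lparr>carrier := Gs a\<rparr> Mod Gs (ord_succ a))"
  using series unfolding composition_series_def by simp

lemma subgroup_succ: "a < m \<Longrightarrow> subgroup (Gs (ord_succ a)) G"
  by (rule is_subgroup[OF ord_succ_le])

lemma succ_subset: "a < m \<Longrightarrow> Gs (ord_succ a) \<subseteq> Gs a"
  by (rule antimono[OF less_imp_le[OF ord_succ_greater] ord_succ_le])

lemma succ_neq: "a < m \<Longrightarrow> Gs (ord_succ a) \<noteq> Gs a"
proof
  assume "a < m" and eq: "Gs (ord_succ a) = Gs a"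
  interpret Ga: group "G\<lparr>carrier := Gs a\<rparr>"
    using subgroup_imp_group[OF is_subgroup] \<open>a < m\<close> by simp
  show False
    using Ga.self_factor_not_simple simple_quotient[OF \<open>a < m\<close>] eq by simp
qed

end

definition schreier_refinement ::
  "('a, 'b) monoid_scheme \<Rightarrow> ('i::wellorder \<Rightarrow> 'a set) \<Rightarrow> ('j \<Rightarrow> 'a set) \<Rightarrow> 'i \<Rightarrow> 'j \<Rightarrow> 'a set"
  where "schreier_refinement G Gs Hs a b = Gs (ord_succ a) <#>\<^bsub>G\<^esub> (Gs a \<inter> Hs b)"

locale profinite_series_pair = G: comp_series G T m Gs + H: comp_series G T d Hs
  for G :: "('a, 'b) monoid_scheme" (structure) and T :: "'a topology"
    and m :: "'i::wellorder" and Gs :: "'i \<Rightarrow> 'a set"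
    and d :: "'j::wellorder" and Hs :: "'j \<Rightarrow> 'a set" +
  assumes profinite: "profinite_group G T"
begin

abbreviation refined :: "'i \<Rightarrow> 'j \<Rightarrow> 'a set"
  where "refined \<equiv> schreier_refinement G Gs Hs"

lemma swap: "profinite_series_pair G T d Hs m Gs"
  by (intro profinite_series_pair.intro profinite_series_pair_axioms.intro)
    (fact H.comp_series_axioms G.comp_series_axioms profinite)+

lemma refined_subgroup: "a < m \<Longrightarrow> b \<le> d \<Longrightarrow> subgroup (refined a b) G"
  unfolding schreier_refinement_def
  using G.normal_set_mult_Int_subgroup[OF G.is_subgroup G.normal_succ H.is_subgroup] by simp

lemma refined_bounds:
  assumes a: "a < m" and b: "b \<le> d"
  shows "Gs (ord_succ a) \<subseteq> refined a b" and "refined a b \<subseteq> Gs a"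
proof -
  have Ga: "subgroup (Gs a) G" and Hb: "subgroup (Hs b) G" and Gsa: "subgroup (Gs (ord_succ a)) G"
    using G.is_subgroup H.is_subgroup G.subgroup_succ a b by auto
  show "Gs (ord_succ a) \<subseteq> refined a b"
  proof
    fix h assume h: "h \<in> Gs (ord_succ a)"
    have "\<one> \<in> Gs a \<inter> Hs b" using Ga Hb subgroup.one_closed by blast
    moreover have "h = h \<otimes> \<one>" using h Gsa subgroup.mem_carrier by fastforce
    ultimately show "h \<in> refined a b"
      unfolding schreier_refinement_def set_mult_def using h by blast
  qed
  show "refined a b \<subseteq> Gs a"
  proof
    fix x assume "x \<in> refined a b"
    then obtain h k where "h \<in> Gs (ord_succ a)" "k \<in> Gs a" "x = h \<otimes> k"
      unfolding schreier_refinement_def set_mult_def by blast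
    with G.succ_subset[OF a] show "x \<in> Gs a" using subgroup.m_closed[OF Ga] by blast
  qed
qed

lemma refined_antimono: "b \<le> b' \<Longrightarrow> b' \<le> d \<Longrightarrow> refined a b' \<subseteq> refined a b"
  using H.antimono unfolding schreier_refinement_def set_mult_def by blast

lemma refined_first:
  assumes a: "a < m"
  shows "refined a (LEAST b. True) = Gs a"
proof
  show "Gs a \<subseteq> refined a (LEAST b. True)"
  proof
    fix x assume x: "x \<in> Gs a"
    have "x \<in> carrier G" using x G.is_subgroup a subgroup.mem_carrier less_imp_le by metis
    then have "x = \<one> \<otimes> x" and "x \<in> Gs a \<inter> Hs (LEAST b. True)"
      using x H.first by auto
    moreover have "\<one> \<in> Gs (ord_succ a)" using G.subgroup_succ[OF a] subgroup.one_closed by blast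
    ultimately show "x \<in> refined a (LEAST b. True)"
      unfolding schreier_refinement_def set_mult_def by blast
  qed
  show "refined a (LEAST b. True) \<subseteq> Gs a"
    using refined_bounds(2)[OF a Least_True_le] .
qed

lemma refined_last:
  assumes a: "a < m"
  shows "refined a d = Gs (ord_succ a)"
proof
  show "refined a d \<subseteq> Gs (ord_succ a)"
  proof
    fix x assume "x \<in> refined a d"
    then obtain h where "h \<in> Gs (ord_succ a)" "x = h \<otimes> \<one>"
      unfolding schreier_refinement_def set_mult_def H.last by blast
    then show "x \<in> Gs (ord_succ a)"
      using subgroup.mem_carrier[OF G.subgroup_succ[OF a]] by simp
  qed
  show "Gs (ord_succ a) \<subseteq> refined a d"
    using refined_bounds(1)[OF a order_refl] .
qed

lemma refined_normal_succ:
  assumes "a < m" and "b < d"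
  shows "refined a (ord_succ b) \<lhd> G\<lparr>carrier := refined a b\<rparr>"
  unfolding schreier_refinement_def using assms
  by (intro G.preliminary2 G.is_subgroup G.normal_succ H.is_subgroup H.normal_succ) simp_all

lemma refined_succ_from_first:
  assumes a: "a < m" and b: "b < d" and "refined a b = Gs a"
  shows "refined a (ord_succ b) = Gs a \<or> refined a (ord_succ b) = Gs (ord_succ a)"
  using G.simple_quotient_normal_between[OF G.is_subgroup G.normal_succ[OF a] G.simple_quotient[OF a]]
    refined_normal_succ[OF a b] refined_bounds(1)[OF a ord_succ_le[OF b]] assms
  by simp

text \<open>This is where compactness of G enters.\<close>
lemma refined_limit:
  assumes a: "a < m" and l: "l \<le> d" "is_limit l" and below: "\<forall>b<l. refined a b = Gs a"
  shows "refined a l = Gs a"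
proof
  show "refined a l \<subseteq> Gs a" using refined_bounds(2)[OF a l(1)] .
  have top: "topspace T = carrier G" and compact: "compact_space T"
    and mult_cont: "continuous_map (prod_topology T T) T (\<lambda>(x, y). x \<otimes> y)"
    and inv_cont: "continuous_map T T (\<lambda>x. inv x)"
    using profinite unfolding profinite_group_def by auto
  have "{b. b < l} \<noteq> {}" using l(2) unfolding is_limit_def by blast
  then have Inter_eq: "(\<Inter>b\<in>{b. b < l}. Gs a \<inter> Hs b) = Gs a \<inter> Hs l"
    using H.limit[OF l] by auto
  show "Gs a \<subseteq> refined a l"
  proof
    fix x assume "x \<in> Gs a"
    have "x \<in> Gs (ord_succ a) <#> (\<Inter>b\<in>{b. b < l}. Gs a \<inter> Hs b)"
    proof (rule G.set_mult_Inter_chain_compact[OF top compact mult_cont inv_cont])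
      show "closedin T (Gs (ord_succ a))" using G.closed ord_succ_le[OF a] by blast
      show "closedin T (Gs a \<inter> Hs b)" if "b \<in> {b. b < l}" for b
        using that a l(1) by (intro closedin_Int G.closed H.closed) auto
      show "Gs a \<inter> Hs b' \<subseteq> Gs a \<inter> Hs b" if "b \<in> {b. b < l}" "b' \<in> {b. b < l}" "b \<le> b'" for b b'
      proof -
        have "b' \<le> d" using that(2) l(1) by simp
        then show ?thesis using H.antimono[OF that(3)] by blast
      qed
      show "{b. b < l} \<noteq> {}" by fact
      show "x \<in> Gs (ord_succ a) <#> (Gs a \<inter> Hs b)" if "b \<in> {b. b < l}" for b
        using below that \<open>x \<in> Gs a\<close> unfolding schreier_refinement_def by auto
    qed
    then show "x \<in> refined a l" unfolding Inter_eq schreier_refinement_def .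
  qed
qed

lemma refined_jump:
  assumes a: "a < m"
  obtains p where "p < d" and "\<And>b. b \<le> d \<Longrightarrow> refined a b = (if b \<le> p then Gs a else Gs (ord_succ a))"
proof -
  define f where "f = (LEAST b. b \<le> d \<and> refined a b \<noteq> Gs a)"
  have "d \<le> d \<and> refined a d \<noteq> Gs a"
    using refined_last[OF a] G.succ_neq[OF a] by simp
  then have f: "f \<le> d" "refined a f \<noteq> Gs a"
    unfolding f_def by (metis (mono_tags, lifting) LeastI)+
  have below_f: "refined a b = Gs a" if "b < f" "b \<le> d" for b
    using not_less_Least[of b "\<lambda>b. b \<le> d \<and> refined a b \<noteq> Gs a"] that unfolding f_def by blast
  have "(LEAST b. True) \<noteq> f" using refined_first[OF a] f(2) by auto
  then have first_f: "(LEAST b. True) < f" using Least_True_le order.not_eq_order_implies_strict by blast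
  have "\<not> is_limit f"
    using refined_limit[OF a f(1)] below_f f by (meson less_le_trans less_imp_le)
  then obtain p where p: "p < f" "f = ord_succ p"
    using not_limit_obtains_ord_succ first_f by blast
  have "p < d" using p(1) f(1) by (rule less_le_trans)
  have at_p: "refined a p = Gs a" using below_f p \<open>p < d\<close> by simp
  have after_p: "refined a (ord_succ p) = Gs (ord_succ a)"
    using refined_succ_from_first[OF a \<open>p < d\<close> at_p] f p by simp
  show thesis
  proof (rule that[OF \<open>p < d\<close>])
    fix b assume "b \<le> d"
    show "refined a b = (if b \<le> p then Gs a else Gs (ord_succ a))"
    proof (cases "b \<le> p")
      case True
      then show ?thesis using below_f p \<open>b \<le> d\<close> by simp
    next
      case False
      then have "ord_succ p \<le> b" using ord_succ_le by (meson not_le)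
      then have "refined a b \<subseteq> Gs (ord_succ a)" using refined_antimono \<open>b \<le> d\<close> after_p by blast
      with False show ?thesis using refined_bounds(1)[OF a \<open>b \<le> d\<close>] by auto
    qed
  qed
qed

lemma refined_jump_unique:
  assumes a: "a < m"
  obtains p where "p < d"
    and "\<And>q. q < d \<Longrightarrow> refined a q \<noteq> refined a (ord_succ q) \<longleftrightarrow> q = p"
    and "refined a p = Gs a" and "refined a (ord_succ p) = Gs (ord_succ a)"
proof -
  obtain p where "p < d"
    and p: "\<And>b. b \<le> d \<Longrightarrow> refined a b = (if b \<le> p then Gs a else Gs (ord_succ a))"
    using refined_jump[OF a] by blast
  have "\<not> ord_succ p \<le> p" using ord_succ_greater[OF \<open>p < d\<close>] by simp
  then have at_p: "refined a p = Gs a" and after_p: "refined a (ord_succ p) = Gs (ord_succ a)"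
    using p ord_succ_le[OF \<open>p < d\<close>] \<open>p < d\<close> by simp_all
  have "refined a q \<noteq> refined a (ord_succ q) \<longleftrightarrow> q = p" if "q < d" for q
  proof -
    have "q \<le> p \<and> \<not> ord_succ q \<le> p \<longleftrightarrow> q = p"
      using ord_succ_le[of q p] ord_succ_greater[OF \<open>p < d\<close>] by (auto simp: le_less)
    moreover have "ord_succ q \<le> p \<Longrightarrow> q \<le> p"
      using ord_succ_greater[OF that] by simp
    ultimately show ?thesis
      using p[of q] p[OF ord_succ_le[OF that]] that G.succ_neq[OF a] by auto
  qed
  then show thesis using that[OF \<open>p < d\<close>] at_p after_p by blast
qed

lemma refined_at_jump:
  assumes a: "a < m" and "p < d" and "refined a p \<noteq> refined a (ord_succ p)"
  shows "refined a p = Gs a" and "refined a (ord_succ p) = Gs (ord_succ a)"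
proof -
  obtain q where "q < d" "\<And>p. p < d \<Longrightarrow> refined a p \<noteq> refined a (ord_succ p) \<longleftrightarrow> p = q"
    "refined a q = Gs a" "refined a (ord_succ q) = Gs (ord_succ a)"
    using refined_jump_unique[OF a] by blast
  with assms(2,3) show "refined a p = Gs a" and "refined a (ord_succ p) = Gs (ord_succ a)" by auto
qed

lemma refined_factor_iso:
  assumes "a < m" and "p < d"
  shows "(G\<lparr>carrier := refined a p\<rparr> Mod refined a (ord_succ p)) \<cong>
    (G\<lparr>carrier := schreier_refinement G Hs Gs p a\<rparr> Mod schreier_refinement G Hs Gs p (ord_succ a))"
  using G.Zassenhaus[OF G.is_subgroup G.normal_succ H.is_subgroup H.normal_succ] assms
  unfolding schreier_refinement_def by (simp add: inf_commute)

text \<open>Zassenhaus' lemma makes the steps at (a, p) and (p, a) isomorphic, so one is trivial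
  exactly when the other is.\<close>
lemma refined_jump_swap:
  assumes a: "a < m" and p: "p < d"
  shows "refined a p \<noteq> refined a (ord_succ p) \<longleftrightarrow>
    schreier_refinement G Hs Gs p a \<noteq> schreier_refinement G Hs Gs p (ord_succ a)"
proof -
  interpret swapped: profinite_series_pair G T d Hs m Gs by (rule swap)
  have "ord_succ p \<le> d" "ord_succ a \<le> m" using ord_succ_le a p by auto
  moreover have "p \<le> d" "a \<le> m" using a p by auto
  ultimately show ?thesis
    using G.iso_quotients_trivial_iff[OF refined_factor_iso[OF a p]]
      refined_subgroup[OF a] swapped.refined_subgroup[OF p] ord_succ_greater[OF a] ord_succ_greater[OF p]
      refined_antimono swapped.refined_antimono
    by (metis less_imp_le)
qed

lemma composition_factors_bij:
  obtains \<phi> where "bij_betw \<phi> {a. a < m} {p. p < d}"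
    and "\<And>a. a < m \<Longrightarrow>
      (G\<lparr>carrier := Gs a\<rparr> Mod Gs (ord_succ a)) \<cong> (G\<lparr>carrier := Hs (\<phi> a)\<rparr> Mod Hs (ord_succ (\<phi> a)))"
proof -
  interpret swapped: profinite_series_pair G T d Hs m Gs by (rule swap)
  define jumps where "jumps a p \<longleftrightarrow> refined a p \<noteq> refined a (ord_succ p)" for a p
  have unique_p: "\<exists>!p. p \<in> {p. p < d} \<and> jumps a p" if "a \<in> {a. a < m}" for a
    using refined_jump_unique[of a] that unfolding jumps_def by (metis mem_Collect_eq)
  have unique_a: "\<exists>!a. a \<in> {a. a < m} \<and> jumps a p" if "p \<in> {p. p < d}" for p
    using swapped.refined_jump_unique[of p] refined_jump_swap that unfolding jumps_def
    by (metis mem_Collect_eq)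
  define \<phi> where "\<phi> a = (THE p. p \<in> {p. p < d} \<and> jumps a p)" for a
  have "bij_betw \<phi> {a. a < m} {p. p < d}"
    unfolding \<phi>_def by (rule bij_betw_THE_unique[OF unique_p unique_a])
  moreover have "(G\<lparr>carrier := Gs a\<rparr> Mod Gs (ord_succ a)) \<cong>
      (G\<lparr>carrier := Hs (\<phi> a)\<rparr> Mod Hs (ord_succ (\<phi> a)))" if a: "a < m" for a
  proof -
    have "\<phi> a < d" and jump: "jumps a (\<phi> a)"
      using theI'[OF unique_p] a unfolding \<phi>_def by auto
    then have "schreier_refinement G Hs Gs (\<phi> a) a \<noteq> schreier_refinement G Hs Gs (\<phi> a) (ord_succ a)"
      using refined_jump_swap[OF a] unfolding jumps_def by blast
    then have "schreier_refinement G Hs Gs (\<phi> a) a = Hs (\<phi> a)"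
      and "schreier_refinement G Hs Gs (\<phi> a) (ord_succ a) = Hs (ord_succ (\<phi> a))"
      using swapped.refined_at_jump[OF \<open>\<phi> a < d\<close> a] by simp_all
    moreover have "refined a (\<phi> a) = Gs a" and "refined a (ord_succ (\<phi> a)) = Gs (ord_succ a)"
      using refined_at_jump[OF a \<open>\<phi> a < d\<close>] jump unfolding jumps_def by simp_all
    ultimately show ?thesis
      using refined_factor_iso[OF a \<open>\<phi> a < d\<close>] by (simp only:)
  qed
  ultimately show thesis by (rule that)
qed

end

theorem theorem1p6:
  fixes G :: "('a, 'b) monoid_scheme" and T :: "'a topology"
    and mu :: "'i::wellorder" and Gs :: "'i \<Rightarrow> 'a set"
    and Delta :: "'j::wellorder" and Hs :: "'j \<Rightarrow> 'a set"
    and S :: "('s, 'c) monoid_scheme"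
  assumes "profinite_group G T"
    and "composition_series G T mu Gs"
    and "composition_series G T Delta Hs"
    and "finite (carrier S)" and "simple_group S"
  shows "{a. a < mu \<and> ((G\<lparr>carrier := Gs a\<rparr>) Mod Gs (ord_succ a)) \<cong> S}
         \<approx> {l. l < Delta \<and> ((G\<lparr>carrier := Hs l\<rparr>) Mod Hs (ord_succ l)) \<cong> S}"
proof -
  have "group G" using assms(1) unfolding profinite_group_def by blast
  with assms(1-3) interpret profinite_series_pair G T mu Gs Delta Hs
    by (intro profinite_series_pair.intro profinite_series_pair_axioms.intro comp_series.intro comp_series_axioms.intro)
  obtain \<phi> where bij: "bij_betw \<phi> {a. a < mu} {p. p < Delta}"
    and iso: "\<And>a. a < mu \<Longrightarrow>
      (G\<lparr>carrier := Gs a\<rparr> Mod Gs (ord_succ a)) \<cong> (G\<lparr>carrier := Hs (\<phi> a)\<rparr> Mod Hs (ord_succ (\<phi> a)))"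
    using composition_factors_bij by blast
  have "(G\<lparr>carrier := Gs a\<rparr> Mod Gs (ord_succ a)) \<cong> S \<longleftrightarrow>
      (G\<lparr>carrier := Hs (\<phi> a)\<rparr> Mod Hs (ord_succ (\<phi> a))) \<cong> S" if a: "a < mu" for a
    using iso_trans[OF iso[OF a]] iso_trans[OF group.iso_sym[OF _ iso[OF a]]]
      normal.factorgroup_is_group[OF G.normal_succ[OF a]] by blast
  with eqpoll_Collect_bij_betw[OF bij] show ?thesis by simp
qed

end
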